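(* Let $r \geq 2$, let $H$ be a digraph (possibly with loops), and let $D$ be an $H$-colored $r$-quasi-transitive digraph such that every directed cycle of length $r+1$ in $D$ is an $H$-cycle. For every $k \geq r$, $D$ has a $(k,H)$-kernel.
   Context: All digraphs are finite. A digraph $D$ is $r$-quasi-transitive if for all distinct $u,v\in V(D)$, whenever there is a directed $uv$-path of length $r$, $u$ and $v$ are joined by an arc (in some direction). $D$ has no loops and comes with a map $\rho: A(D)\to V(H)$. For a walk $W=(x_0,\ldots,x_n)$ in $D$, there is an obstruction on $x_i$ if $(\rho(x_{i-1},x_i),\rho(x_i,x_{i+1})) \notin A(H)$; for an open walk this is considered at internal vertices $x_i$, $1\le i\le n-1$, for a closed walk at all $i\in\{0,\ldots,n-1\}$ with indices modulo $n$. $O_H(W)$ is the set of indices with an obstruction; the $H$-length is $l_H(W)=|O_H(W)|+1$ for open $W$ and $|O_H(W)|$ for closed $W$. An $H$-cycle is a directed cycle with no obstructions. A $(k,H)$-kernel ($k\ge2$) is a set $S\subseteq V(D)$ such that for every two distinct $u,v\in S$ every directed $uv$-path in $D$ has $H$-length at least $k$, and for every $x\in V(D)\setminus S$ there is a directed path from $x$ to a vertex of $S$ of $H$-length at most $k-1$. *)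

theory Defs
  imports Main
begin

definition digraph :: "'a set \<Rightarrow> ('a \<times> 'a) set \<Rightarrow> bool" where
  "digraph V A \<longleftrightarrow> A \<subseteq> V \<times> V"

definition loopless :: "('a \<times> 'a) set \<Rightarrow> bool" where
  "loopless A \<longleftrightarrow> (\<forall>x. (x, x) \<notin> A)"

definition H_coloring :: "('a \<times> 'a) set \<Rightarrow> 'c set \<Rightarrow> ('a \<times> 'a \<Rightarrow> 'c) \<Rightarrow> bool" where
  "H_coloring A VH rho \<longleftrightarrow> (\<forall>e\<in>A. rho e \<in> VH)"

text \<open>A directed path, given by its vertex list (x_0,...,x_n): distinct vertices, consecutive arcs.
  Its length is n = length xs - 1.\<close>
definition dpath :: "'a set \<Rightarrow> ('a \<times> 'a) set \<Rightarrow> 'a list \<Rightarrow> bool" where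
  "dpath V A xs \<longleftrightarrow> xs \<noteq> [] \<and> distinct xs \<and> set xs \<subseteq> V \<and>
     (\<forall>i. Suc i < length xs \<longrightarrow> (xs ! i, xs ! Suc i) \<in> A)"

definition dpath_from_to :: "'a set \<Rightarrow> ('a \<times> 'a) set \<Rightarrow> 'a \<Rightarrow> 'a \<Rightarrow> 'a list \<Rightarrow> bool" where
  "dpath_from_to V A u v xs \<longleftrightarrow> dpath V A xs \<and> hd xs = u \<and> last xs = v"

definition r_quasi_transitive :: "nat \<Rightarrow> 'a set \<Rightarrow> ('a \<times> 'a) set \<Rightarrow> bool" where
  "r_quasi_transitive r V A \<longleftrightarrow>
     (\<forall>u\<in>V. \<forall>v\<in>V. u \<noteq> v \<longrightarrow>
        (\<exists>xs. dpath_from_to V A u v xs \<and> length xs = r + 1) \<longrightarrow>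
        (u, v) \<in> A \<or> (v, u) \<in> A)"

definition obstr_open :: "('c \<times> 'c) set \<Rightarrow> ('a \<times> 'a \<Rightarrow> 'c) \<Rightarrow> 'a list \<Rightarrow> nat set" where
  "obstr_open AH rho xs = {i. 1 \<le> i \<and> Suc i < length xs \<and>
      (rho (xs ! (i - 1), xs ! i), rho (xs ! i, xs ! Suc i)) \<notin> AH}"

definition H_length_open :: "('c \<times> 'c) set \<Rightarrow> ('a \<times> 'a \<Rightarrow> 'c) \<Rightarrow> 'a list \<Rightarrow> nat" where
  "H_length_open AH rho xs = card (obstr_open AH rho xs) + 1"

text \<open>A directed cycle (x_0,...,x_{n-1},x_0), given by the list of its n distinct vertices;
  arcs x_i -> x_{(i+1) mod n}; its length is n.\<close>
definition dcycle :: "'a set \<Rightarrow> ('a \<times> 'a) set \<Rightarrow> 'a list \<Rightarrow> bool" where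
  "dcycle V A xs \<longleftrightarrow> length xs \<ge> 2 \<and> distinct xs \<and> set xs \<subseteq> V \<and>
     (\<forall>i < length xs. (xs ! i, xs ! ((i + 1) mod length xs)) \<in> A)"

definition obstr_closed :: "('c \<times> 'c) set \<Rightarrow> ('a \<times> 'a \<Rightarrow> 'c) \<Rightarrow> 'a list \<Rightarrow> nat set" where
  "obstr_closed AH rho xs = (let n = length xs in {i. i < n \<and>
      (rho (xs ! ((i + n - 1) mod n), xs ! i), rho (xs ! i, xs ! ((i + 1) mod n))) \<notin> AH})"

definition H_cycle :: "'a set \<Rightarrow> ('a \<times> 'a) set \<Rightarrow> ('c \<times> 'c) set \<Rightarrow> ('a \<times> 'a \<Rightarrow> 'c) \<Rightarrow> 'a list \<Rightarrow> bool" where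
  "H_cycle V A AH rho xs \<longleftrightarrow> dcycle V A xs \<and> obstr_closed AH rho xs = {}"

definition kH_kernel :: "nat \<Rightarrow> 'a set \<Rightarrow> ('a \<times> 'a) set \<Rightarrow> ('c \<times> 'c) set \<Rightarrow> ('a \<times> 'a \<Rightarrow> 'c) \<Rightarrow> 'a set \<Rightarrow> bool" where
  "kH_kernel k V A AH rho S \<longleftrightarrow> S \<subseteq> V \<and>
     (\<forall>u\<in>S. \<forall>v\<in>S. u \<noteq> v \<longrightarrow>
        (\<forall>xs. dpath_from_to V A u v xs \<longrightarrow> H_length_open AH rho xs \<ge> k)) \<and>
     (\<forall>x\<in>V - S. \<exists>v\<in>S. \<exists>xs. dpath_from_to V A x v xs \<and> H_length_open AH rho xs \<le> k - 1)"

end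

theory Submission
  imports Defs
begin

text \<open>Take for S a kernel of the reachability relation: no vertex of S reaches another one, and
  every vertex outside S reaches S. Such a set exists for every transitive relation on a finite
  set (take a vertex v of a terminal strong component, discard v together with everything that
  reaches it, and recurse). The first kernel condition then holds vacuously. For absorption, a
  shortest walk from x to S is a path without forward chords. If it has at most r vertices, its
  H-length is at most r - 1. Otherwise any r + 1 consecutive vertices x_i, ..., x_(i+r) of it
  form a path of length r, so quasi-transitivity and chordlessness force the arc
  x_(i+r) -> x_i; this closes a cycle of length r + 1, which is an H-cycle. Every internal
  vertex of the walk is internal to such a window, so the walk has no obstruction at all.\<close>

definition relation_kernel :: "('a \<times> 'a) set \<Rightarrow> 'a set \<Rightarrow> 'a set \<Rightarrow> bool" where
  "relation_kernel T V S \<longleftrightarrow> S \<subseteq> V \<and> (\<forall>u\<in>S. \<forall>w\<in>S. u \<noteq> w \<longrightarrow> (u, w) \<notin> T) \<and>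
     (\<forall>x\<in>V - S. \<exists>w\<in>S. (x, w) \<in> T)"

lemma trans_terminal_element:
  assumes "finite V" "V \<noteq> {}" "trans T"
  obtains v where "v \<in> V" "\<And>z. z \<in> V \<Longrightarrow> (v, z) \<in> T \<Longrightarrow> (z, v) \<in> T"
proof -
  define up where "up v = V \<inter> T\<^sup>= `` {v}" for v
  obtain v where v: "v \<in> V" and least: "\<And>w. w \<in> V \<Longrightarrow> card (up v) \<le> card (up w)"
    using ex_has_least_nat[of "\<lambda>v. v \<in> V" _ "\<lambda>v. card (up v)"] assms(2) by blast
  have "(z, v) \<in> T" if z: "z \<in> V" and vz: "(v, z) \<in> T" for z
  proof (rule ccontr)
    assume zv: "(z, v) \<notin> T"
    have "up z \<subset> up v"
      using vz zv v transD[OF assms(3), of v z] unfolding up_def by blast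
    then have "card (up z) < card (up v)"
      using assms(1) by (simp add: psubset_card_mono up_def)
    with least[OF z] show False by simp
  qed
  with v that show thesis by blast
qed

lemma trans_relation_kernel_exists:
  assumes "finite V" "trans T"
  shows "\<exists>S. relation_kernel T V S"
  using assms(1)
proof (induction V rule: finite_psubset_induct)
  case (psubset V)
  show ?case
  proof (cases "V = {}")
    case True
    then show ?thesis by (auto simp: relation_kernel_def)
  next
    case False
    obtain v where v: "v \<in> V" and terminal: "\<And>z. z \<in> V \<Longrightarrow> (v, z) \<in> T \<Longrightarrow> (z, v) \<in> T"
      using trans_terminal_element[OF psubset.hyps False assms(2)] by blast
    define V' where "V' = {x \<in> V. x \<noteq> v \<and> (x, v) \<notin> T}"
    have "V' \<subset> V" using v by (auto simp: V'_def)
    then obtain S' where "relation_kernel T V' S'" using psubset.IH by blast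
    then have "relation_kernel T V (insert v S')"
      using v terminal unfolding relation_kernel_def V'_def by blast
    then show ?thesis by blast
  qed
qed

definition walk :: "('a \<times> 'a) set \<Rightarrow> 'a list \<Rightarrow> bool" where
  "walk A xs \<longleftrightarrow> xs \<noteq> [] \<and> successively (\<lambda>x y. (x, y) \<in> A) xs"

lemma walk_append:
  "walk A xs \<Longrightarrow> walk A ys \<Longrightarrow> (last xs, hd ys) \<in> A \<Longrightarrow> walk A (xs @ ys)"
  by (simp add: walk_def successively_append_iff)

lemma walk_take: "walk A xs \<Longrightarrow> 0 < n \<Longrightarrow> walk A (take n xs)"
  using successively_append_iff[of _ "take n xs" "drop n xs"] by (auto simp: walk_def)

lemma walk_drop: "walk A xs \<Longrightarrow> n < length xs \<Longrightarrow> walk A (drop n xs)"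
  using successively_append_iff[of _ "take n xs" "drop n xs"] by (auto simp: walk_def)

lemma walk_rtrancl: "walk A xs \<Longrightarrow> (hd xs, last xs) \<in> A\<^sup>*"
proof (induction xs)
  case (Cons x ys)
  show ?case
  proof (cases "ys = []")
    case False
    then have "(x, hd ys) \<in> A" "walk A ys"
      using Cons.prems by (auto simp: walk_def successively_Cons)
    with Cons.IH False show ?thesis by (auto intro: converse_rtrancl_into_rtrancl)
  qed simp
qed (simp add: walk_def)

lemma rtrancl_iff_walk: "(u, v) \<in> A\<^sup>* \<longleftrightarrow> (\<exists>xs. walk A xs \<and> hd xs = u \<and> last xs = v)"
proof
  assume "(u, v) \<in> A\<^sup>*"
  then show "\<exists>xs. walk A xs \<and> hd xs = u \<and> last xs = v"
  proof (induction rule: rtrancl_induct)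
    case base
    show ?case by (rule exI[of _ "[u]"]) (simp add: walk_def)
  next
    case (step y z)
    then obtain xs where "walk A xs" "hd xs = u" "last xs = y" by blast
    moreover have "walk A [z]" by (simp add: walk_def)
    ultimately show ?case
      using step.hyps(2) walk_append[of A xs "[z]"] by (intro exI[of _ "xs @ [z]"]) (auto simp: walk_def)
  qed
qed (auto dest: walk_rtrancl)

lemma dpath_iff_walk: "dpath V A xs \<longleftrightarrow> walk A xs \<and> distinct xs \<and> set xs \<subseteq> V"
  by (auto simp: dpath_def walk_def successively_conv_nth)

lemma dpath_take_drop:
  assumes "dpath V A xs" "i < length xs" "0 < n"
  shows "dpath V A (take n (drop i xs))"
proof -
  have "set (take n (drop i xs)) \<subseteq> set xs"
    by (meson order_trans set_drop_subset set_take_subset)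
  with assms show ?thesis
    by (auto simp: dpath_iff_walk walk_take walk_drop)
qed

lemma walk_set_subset:
  assumes "digraph V A" "walk A xs" "hd xs \<in> V"
  shows "set xs \<subseteq> V"
  using assms(2,3)
proof (induction xs)
  case (Cons x ys)
  show ?case
  proof (cases "ys = []")
    case False
    then have "(x, hd ys) \<in> A" "walk A ys"
      using Cons.prems by (auto simp: walk_def successively_Cons)
    with assms(1) Cons show ?thesis by (auto simp: digraph_def)
  qed (use Cons.prems in simp)
qed simp

lemma walk_shortcut:
  assumes "walk A xs" "i \<le> j" "j < length xs" "0 < i \<Longrightarrow> (xs ! (i - 1), xs ! j) \<in> A"
  shows "walk A (take i xs @ drop j xs)"
proof (cases "i = 0")
  case False
  have "last (take i xs) = xs ! (i - 1)"
    using False assms(2,3) by (subst last_conv_nth) auto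
  moreover have "hd (drop j xs) = xs ! j"
    using assms(3) by (rule hd_drop_conv_nth)
  ultimately show ?thesis
    using False assms by (simp add: walk_append walk_take walk_drop)
qed (simp add: assms walk_drop)

definition shortest_walk :: "('a \<times> 'a) set \<Rightarrow> 'a list \<Rightarrow> bool" where
  "shortest_walk A xs \<longleftrightarrow> walk A xs \<and>
     (\<forall>ys. walk A ys \<and> hd ys = hd xs \<and> last ys = last xs \<longrightarrow> length xs \<le> length ys)"

lemma shortest_walk_exists:
  assumes "walk A xs"
  shows "\<exists>ys. shortest_walk A ys \<and> hd ys = hd xs \<and> last ys = last xs"
  using ex_has_least_nat[of "\<lambda>ys. walk A ys \<and> hd ys = hd xs \<and> last ys = last xs" xs length] assms
  unfolding shortest_walk_def by auto

lemma shortest_walk_no_chord: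
  assumes "shortest_walk A xs" "i < j" "j < length xs" "(xs ! i, xs ! j) \<in> A"
  shows "j = Suc i"
proof (rule ccontr)
  assume "j \<noteq> Suc i"
  let ?ys = "take (Suc i) xs @ drop j xs"
  have "walk A ?ys"
    using assms walk_shortcut[of A xs "Suc i" j] by (simp add: shortest_walk_def)
  moreover have "hd ?ys = hd xs" "last ?ys = last xs"
    using assms(3) by (cases xs; auto)+
  ultimately have "length xs \<le> length ?ys"
    using assms(1) by (auto simp: shortest_walk_def)
  with assms(2,3) \<open>j \<noteq> Suc i\<close> show False by simp
qed

lemma shortest_walk_distinct:
  assumes "shortest_walk A xs"
  shows "distinct xs"
proof (rule ccontr)
  assume "\<not> distinct xs"
  then obtain i j where ij: "i < j" "j < length xs" "xs ! i = xs ! j"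
    by (metis distinct_conv_nth linorder_neqE_nat)
  let ?ys = "take i xs @ drop j xs"
  have xs: "walk A xs" using assms by (simp add: shortest_walk_def)
  have "walk A ?ys"
  proof (rule walk_shortcut[OF xs])
    show "(xs ! (i - 1), xs ! j) \<in> A" if "0 < i"
      using successively_nth[of "\<lambda>x y. (x, y) \<in> A" xs "i - 1"] xs that ij by (simp add: walk_def)
  qed (use ij in simp_all)
  moreover have "hd ?ys = hd xs"
  proof (cases "i = 0")
    case True
    have "xs \<noteq> []" using ij by auto
    with True ij show ?thesis by (simp add: hd_drop_conv_nth hd_conv_nth)
  qed (use ij in \<open>cases xs; simp\<close>)
  moreover have "last ?ys = last xs"
    using ij by simp
  ultimately have "length xs \<le> length ?ys"
    using assms by (auto simp: shortest_walk_def)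
  with ij show False by simp
qed

lemma shortest_walk_dpath:
  assumes "digraph V A" "shortest_walk A xs" "hd xs \<in> V"
  shows "dpath V A xs"
  using assms walk_set_subset[of V A xs] shortest_walk_distinct[of A xs]
  by (simp add: dpath_iff_walk shortest_walk_def)

lemma card_obstr_open_le: "card (obstr_open AH rho xs) \<le> length xs - 2"
proof -
  have "obstr_open AH rho xs \<subseteq> {1..<length xs - 1}"
    by (auto simp: obstr_open_def)
  then show ?thesis
    using card_mono[of "{1..<length xs - 1}" "obstr_open AH rho xs"] by simp
qed

lemma H_cycle_obstr_open_empty:
  assumes "H_cycle V A AH rho c"
  shows "obstr_open AH rho c = {}"
proof (rule equals0I)
  fix t assume t: "t \<in> obstr_open AH rho c"
  let ?n = "length c"
  have t_range: "1 \<le> t" "Suc t < ?n" using t by (auto simp: obstr_open_def)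
  have "(t + ?n - 1) mod ?n = t - 1"
    using t_range by (cases t) simp_all
  moreover have "(t + 1) mod ?n = Suc t" using t_range by simp
  ultimately have "t \<in> obstr_closed AH rho c"
    using t t_range by (simp add: obstr_open_def obstr_closed_def Let_def)
  with assms show False by (simp add: H_cycle_def)
qed

lemma obstr_open_window:
  assumes "m \<in> obstr_open AH rho xs" "i < m" "Suc m < i + n" "i + n \<le> length xs"
  shows "m - i \<in> obstr_open AH rho (take n (drop i xs))"
proof -
  have "take n (drop i xs) ! t = xs ! (i + t)" if "t < n" for t
    using that assms(4) by simp
  then show ?thesis
    using assms by (auto simp: obstr_open_def Suc_diff_le)
qed

lemma dcycle_if_closed_dpath:
  assumes "dpath V A c" "2 \<le> length c" "(last c, hd c) \<in> A"
  shows "dcycle V A c"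
  unfolding dcycle_def
proof (intro conjI allI impI)
  fix t assume t: "t < length c"
  show "(c ! t, c ! ((t + 1) mod length c)) \<in> A"
  proof (cases "Suc t = length c")
    case True
    have "c \<noteq> []" using assms(2) by auto
    with True assms(3) show ?thesis by (simp add: last_conv_nth hd_conv_nth flip: True)
  next
    case False
    with t assms(1) show ?thesis by (simp add: dpath_def)
  qed
qed (use assms in \<open>simp_all add: dpath_def\<close>)

lemma shortest_walk_window_dcycle:
  assumes "2 \<le> r" "r_quasi_transitive r V A" "shortest_walk A xs" "dpath V A xs"
    and "i + r < length xs"
  shows "dcycle V A (take (Suc r) (drop i xs))"
proof -
  let ?c = "take (Suc r) (drop i xs)"
  have dist: "distinct xs" and set: "set xs \<subseteq> V"
    using assms(4) by (simp_all add: dpath_iff_walk)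
  have "dpath V A ?c"
    using dpath_take_drop[OF assms(4)] assms(5) by simp
  have c: "length ?c = Suc r" "hd ?c = xs ! i" "last ?c = xs ! (i + r)"
    using assms(5) by (simp_all add: hd_drop_conv_nth last_conv_nth)
  have "xs ! i \<noteq> xs ! (i + r)"
    using dist assms(1,5) by (simp add: nth_eq_iff_index_eq)
  moreover have "xs ! i \<in> V" "xs ! (i + r) \<in> V"
    using set assms(5) by auto
  ultimately have "(xs ! i, xs ! (i + r)) \<in> A \<or> (xs ! (i + r), xs ! i) \<in> A"
    using assms(2) \<open>dpath V A ?c\<close> c unfolding r_quasi_transitive_def dpath_from_to_def by force
  moreover have "(xs ! i, xs ! (i + r)) \<notin> A"
    using shortest_walk_no_chord[OF assms(3), of i "i + r"] assms(1,5) by auto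
  ultimately show ?thesis
    using dcycle_if_closed_dpath[OF \<open>dpath V A ?c\<close>] c assms(1) by simp
qed

lemma shortest_walk_H_length_le:
  assumes "2 \<le> r" "r_quasi_transitive r V A"
    and cycles: "\<forall>c. dcycle V A c \<and> length c = r + 1 \<longrightarrow> H_cycle V A AH rho c"
    and "shortest_walk A xs" "dpath V A xs"
  shows "H_length_open AH rho xs \<le> r - 1"
proof (cases "length xs \<le> r")
  case True
  then show ?thesis
    using card_obstr_open_le[of AH rho xs] assms(1) by (simp add: H_length_open_def)
next
  case False
  have "obstr_open AH rho xs = {}"
  proof (rule equals0I)
    fix m assume m: "m \<in> obstr_open AH rho xs"
    then have "1 \<le> m" "Suc m < length xs" by (auto simp: obstr_open_def)
    define i where "i = min (m - 1) (length xs - Suc r)"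
    have i: "i < m" "Suc m < i + Suc r" "i + r < length xs"
      using \<open>1 \<le> m\<close> \<open>Suc m < length xs\<close> False assms(1) by (auto simp: i_def)
    then have "H_cycle V A AH rho (take (Suc r) (drop i xs))"
      using cycles shortest_walk_window_dcycle[OF assms(1,2,4,5)] by simp
    moreover have "m - i \<in> obstr_open AH rho (take (Suc r) (drop i xs))"
      using obstr_open_window[OF m] i by simp
    ultimately show False
      using H_cycle_obstr_open_empty by blast
  qed
  then show ?thesis
    using assms(1) by (simp add: H_length_open_def)
qed

theorem theorem22:
  fixes r k :: nat and V :: "'a set" and A :: "('a \<times> 'a) set"
    and VH :: "'c set" and AH :: "('c \<times> 'c) set" and rho :: "'a \<times> 'a \<Rightarrow> 'c"
  assumes "r \<ge> 2"
    and "finite V" and "digraph V A" and "loopless A"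
    and "finite VH" and "digraph VH AH"
    and "H_coloring A VH rho"
    and "r_quasi_transitive r V A"
    and "\<forall>xs. dcycle V A xs \<and> length xs = r + 1 \<longrightarrow> H_cycle V A AH rho xs"
    and "k \<ge> r"
  shows "\<exists>S. kH_kernel k V A AH rho S"
proof -
  obtain S where S: "relation_kernel (A\<^sup>*) V S"
    using trans_relation_kernel_exists[OF assms(2) trans_rtrancl] by blast
  have "kH_kernel k V A AH rho S"
    unfolding kH_kernel_def
  proof (intro conjI ballI allI impI)
    fix u v xs assume "u \<in> S" "v \<in> S" "u \<noteq> v" "dpath_from_to V A u v xs"
    then have "(u, v) \<in> A\<^sup>*" "(u, v) \<notin> A\<^sup>*"
      using S by (auto simp: dpath_from_to_def dpath_iff_walk rtrancl_iff_walk relation_kernel_def)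
    then show "k \<le> H_length_open AH rho xs" by blast
  next
    fix x assume x: "x \<in> V - S"
    then obtain v where "v \<in> S" "(x, v) \<in> A\<^sup>*"
      using S unfolding relation_kernel_def by blast
    then obtain xs where xs: "shortest_walk A xs" "hd xs = x" "last xs = v"
      using shortest_walk_exists by (metis rtrancl_iff_walk)
    have "dpath V A xs"
      using shortest_walk_dpath[OF assms(3) xs(1)] xs(2) x by simp
    then have "dpath_from_to V A x v xs" "H_length_open AH rho xs \<le> k - 1"
      using xs shortest_walk_H_length_le[OF assms(1,8,9) xs(1)] assms(10)
      by (simp_all add: dpath_from_to_def)
    then show "\<exists>v\<in>S. \<exists>xs. dpath_from_to V A x v xs \<and> H_length_open AH rho xs \<le> k - 1"
      using \<open>v \<in> S\<close> by blast
  qed (use S in \<open>simp add: relation_kernel_def\<close>)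
  then show ?thesis by blast
qed

end
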